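(* Let $\mathfrak L=\mathbb V\oplus\mathbb W$ be a color gLt-algebra admitting a quasi-multiplicative basis $\mathfrak B=\{e_i\}_{i\in I}$ of $\mathbb W\neq 0$. If $\mathfrak L$ is simple, then any two elements of the index set $I$ are connected.
   Context: Let $\mathbb F$ be a field, $\mathbb G$ an abelian group, $n\ge 2$, and $\epsilon:\mathbb G\times\mathbb G\to\mathbb F\setminus\{0\}$ a bicharacter ($\epsilon(k,g+h)=\epsilon(k,g)\epsilon(k,h)$, $\epsilon(g+h,k)=\epsilon(g,k)\epsilon(h,k)$, $\epsilon(g,h)\epsilon(h,g)=1$). A graded $n$-ary algebra is a $\mathbb G$-graded vector space $\mathfrak L=\bigoplus_{g\in\mathbb G}\mathfrak L_g$ with an $n$-linear map $\langle\cdot,\dots,\cdot\rangle:\mathfrak L^n\to\mathfrak L$ such that $\langle\mathfrak L_{g_1},\dots,\mathfrak L_{g_n}\rangle\subset\mathfrak L_{g_1+\dots+g_n}$. For $\sigma\in\mathbb S_n$ write $\langle x_1,\dots,x_n\rangle_\sigma:=\langle x_{\sigma(1)},\dots,x_{\sigma(n)}\rangle$; for subsets $A_1,\dots,A_n$, $\langle A_1,\dots,A_n\rangle_\sigma$ denotes the linear span of all $\langle x_1,\dots,x_n\rangle_\sigma$ with $x_r\in A_r$. A color gLt-algebra is a graded $n$-ary algebra satisfying, for each $k=1,\dots,n$ and fixed scalars $\alpha^{\sigma_1,\sigma_2}_{i,j,k}\in\mathbb F$, the color version (each term on the right multiplied by the product of values of $\epsilon$ on the degrees of the homogeneous arguments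 transposed in passing from the left-hand order to the order of that term) of the identity $\langle y_1,\dots,y_{k-1},\langle x_1,\dots,x_n\rangle,y_k,\dots,y_{n-1}\rangle=\sum_{1\le i,j\le n,\,\sigma_1\in\mathbb S_n,\,\sigma_2\in\mathbb S_{n-1}}\alpha^{\sigma_1,\sigma_2}_{i,j,k}\langle x_{\sigma_1(1)},\dots,x_{\sigma_1(i-1)},\langle y_{\sigma_2(1)},\dots,y_{\sigma_2(j-1)},x_{\sigma_1(i)},y_{\sigma_2(j)},\dots,y_{\sigma_2(n-1)}\rangle,x_{\sigma_1(i+1)},\dots,x_{\sigma_1(n)}\rangle$. A $\mathbb G$-graded subspace $\mathcal I\subset\mathfrak L$ is a color gLt-ideal if $\langle\mathcal I,\mathfrak L,\dots,\mathfrak L\rangle_\sigma\subset\mathcal I$ for every $\sigma\in\mathbb S_n$. $\mathfrak L$ is simple if its only color gLt-ideals are $\{0\}$ and $\mathfrak L$. $\mathfrak L$ admits a quasi-multiplicative basis if $\mathfrak L=\mathbb V\oplus\mathbb W$ with $\mathbb V$, $\mathbb W\ne0$ graded subspaces and $\mathfrak B=\{e_i\}_{i\in I}$ a basis of homogeneous elements of $\mathbb W$ such that: (1) for $i_1,\dots,i_n\in I$, either $\langle e_{i_1},\dots,e_{i_n}\rangle\in\mathbb Fe_j$ for some $j\in I$ or $\langle e_{i_1},\dots,e_{i_n}\rangle\in\mathbb V$; (2) for $0<k<n$, $i_1,\dots,i_k\in I$ and $\sigma\in\mathbb S_n$, $\langle e_{i_1},\dots,e_{i_k},\mathbb V,\dots,\mathbb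 V\rangle_\sigma\subset\mathbb Fe_{j_\sigma}$ for some $j_\sigma\in I$; (3) either $\langle\mathbb V,\dots,\mathbb V\rangle\subset\mathbb Fe_j$ for some $j\in I$ or $\langle\mathbb V,\dots,\mathbb V\rangle\subset\mathbb V$. Index maps: let $v$ be a symbol not in $I$, $\mathfrak I:=I\,\dot\cup\,\{v\}$; for each $j\in\mathfrak I$ take a new symbol $\overline j$, $\overline I:=\{\overline i:i\in I\}$, $\overline{\mathfrak I}:=\overline I\,\dot\cup\,\{\overline v\}$; set $\overline{(\overline j)}:=j$, $\overline J:=\{\overline j:j\in J\}$ for a set $J$ of symbols ($\overline\emptyset=\emptyset$). Put $u_j:=e_j$ for $j\in I$ and $u_v:=\mathbb V$. For $\sigma\in\mathbb S_n$ and $(j_1,\dots,j_n)\in\mathfrak I^n$ let $a_\sigma(j_1,\dots,j_n)=\{r\}$ if $r\in I$ and $0\ne\langle u_{j_1},\dots,u_{j_n}\rangle_\sigma\subset\mathbb Fe_r$, $=\{v\}$ if $0\ne\langle u_{j_1},\dots,u_{j_n}\rangle_\sigma\subset\mathbb V$, and $=\emptyset$ otherwise. For $j,j_2,\dots,j_n\in\mathfrak I$ let $b_\sigma(j,\overline j_2,\dots,\overline j_n):=\{x\in\mathfrak I: a_\sigma(x,j_2,\dots,j_n)=\{j\}\}$. Define $\mu$ on $(\mathfrak I\,\dot\cup\,\overline{\mathfrak I})\times(\mathfrak I^{n-1}\,\dot\cup\,\overline{\mathfrak I}^{n-1})$ with values subsets of $\mathfrak I$ by: $\mu(j,j_1,\dots,j_{n-1})=\bigcup_{\sigma\in\mathbb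 S_n}a_\sigma(j,j_1,\dots,j_{n-1})$ for $j,j_1,\dots,j_{n-1}\in\mathfrak I$; $\mu(j,\overline j_1,\dots,\overline j_{n-1})=\bigcup_{\sigma\in\mathbb S_n}b_\sigma(j,\overline j_1,\dots,\overline j_{n-1})$ for $j,j_1,\dots,j_{n-1}\in\mathfrak I$; $\mu(\overline j,j_1,\dots,j_{n-1})=\bigcup_{1\le k\le n-1,\ \sigma\in\mathbb S_n}b_\sigma(j_k,\overline j,\overline j_1,\dots,\overline j_{k-1},\overline j_{k+1},\dots,\overline j_{n-1})$ for $j,j_1,\dots,j_{n-1}\in\mathfrak I$; and $\mu(\overline j,\overline j_1,\dots,\overline j_{n-1})=\emptyset$. Define $\phi$ on pairs $(J,X)$ with $J\subset I\,\dot\cup\,\overline I$ and $X\in\mathfrak I^{n-1}\,\dot\cup\,\overline{\mathfrak I}^{n-1}$ by $\phi(\emptyset,X)=\emptyset$ and, for $J\ne\emptyset$, $\phi(J,X):=K\cup\overline K$ where $K:=\big(\bigcup_{j\in J}\mu(j,X)\big)\setminus\{v\}$. Connections: for distinct $i,j\in I$, $i$ is connected to $j$ if there exist $t\ge1$, $X_1,\dots,X_t\in\mathfrak I^{n-1}\,\dot\cup\,\overline{\mathfrak I}^{n-1}$ and $\widetilde i\in\{i,\overline i\}$ such that $\phi(\{\widetilde i\},X_1)\ne\emptyset$, …, $\phi(\cdots\phi(\{\widetilde i\},X_1)\cdots,X_{t-1})\ne\emptyset$, and $j\in\phi(\cdots\phi(\phi(\{\widetilde i\},X_1),X_2)\cdots,X_t)$;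 every $i$ is connected to itself. *)

theory Defs
  imports Complex_Main "HOL-Combinatorics.Permutations"
begin

text \<open>Conventions: the n-ary product is a function br :: (nat => 'v) => 'v whose
  arguments are indexed 0..n-1 (0-based). The field is 'k, the grading group is 'g,
  the algebra is the whole type 'v (a vector space over 'k via scale).
  The index set I of the basis is the type 'i; the extra symbol v is None in 'i option.
  A barred symbol is tagged with Inr, an unbarred one with Inl.\<close>

definition ins :: "nat \<Rightarrow> 'a \<Rightarrow> (nat \<Rightarrow> 'a) \<Rightarrow> nat \<Rightarrow> 'a" where
  "ins k z f p = (if p < k then f p else if p = k then z else f (p - 1))"

definition del :: "nat \<Rightarrow> (nat \<Rightarrow> 'a) \<Rightarrow> nat \<Rightarrow> 'a" where
  "del k f p = (if p < k then f p else f (Suc p))"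

definition perms :: "nat \<Rightarrow> (nat \<Rightarrow> nat) set" where
  "perms n = {\<sigma>. \<sigma> permutes {..<n}}"

definition hom_decomp :: "('g \<Rightarrow> 'v set) \<Rightarrow> 'v::comm_monoid_add \<Rightarrow> ('g \<Rightarrow> 'v) \<Rightarrow> bool" where
  "hom_decomp Lg x c \<longleftrightarrow> finite {g. c g \<noteq> 0} \<and> (\<forall>g. c g \<in> Lg g) \<and> x = (\<Sum>g\<in>{g. c g \<noteq> 0}. c g)"

definition graded_space :: "('k::field \<Rightarrow> 'v::ab_group_add \<Rightarrow> 'v) \<Rightarrow> ('g \<Rightarrow> 'v set) \<Rightarrow> bool" where
  "graded_space scale Lg \<longleftrightarrow> vector_space scale \<and> (\<forall>g. module.subspace scale (Lg g))
     \<and> (\<forall>x. \<exists>!c. hom_decomp Lg x c)"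

definition graded_subspace :: "('k::field \<Rightarrow> 'v::ab_group_add \<Rightarrow> 'v) \<Rightarrow> ('g \<Rightarrow> 'v set) \<Rightarrow> 'v set \<Rightarrow> bool" where
  "graded_subspace scale Lg S \<longleftrightarrow> module.subspace scale S
     \<and> (\<forall>x\<in>S. \<forall>c. hom_decomp Lg x c \<longrightarrow> (\<forall>g. c g \<in> S))"

definition bicharacter :: "('g::ab_group_add \<Rightarrow> 'g \<Rightarrow> 'k::field) \<Rightarrow> bool" where
  "bicharacter eps \<longleftrightarrow> (\<forall>g h. eps g h \<noteq> 0)
     \<and> (\<forall>k g h. eps k (g + h) = eps k g * eps k h)
     \<and> (\<forall>g h k. eps (g + h) k = eps g k * eps h k)
     \<and> (\<forall>g h. eps g h * eps h g = 1)"

definition multilinear :: "('k::field \<Rightarrow> 'v::ab_group_add \<Rightarrow> 'v) \<Rightarrow> nat \<Rightarrow> ((nat \<Rightarrow> 'v) \<Rightarrow> 'v) \<Rightarrow> bool" where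
  "multilinear scale n br \<longleftrightarrow>
     (\<forall>f f'. (\<forall>p<n. f p = f' p) \<longrightarrow> br f = br f')
   \<and> (\<forall>f p a b. p < n \<longrightarrow> br (f(p := a + b)) = br (f(p := a)) + br (f(p := b)))
   \<and> (\<forall>f p c a. p < n \<longrightarrow> br (f(p := scale c a)) = scale c (br (f(p := a))))"

definition graded_product :: "('g::ab_group_add \<Rightarrow> 'v set) \<Rightarrow> nat \<Rightarrow> ((nat \<Rightarrow> 'v) \<Rightarrow> 'v) \<Rightarrow> bool" where
  "graded_product Lg n br \<longleftrightarrow>
     (\<forall>d f. (\<forall>p<n. f p \<in> Lg (d p)) \<longrightarrow> br f \<in> Lg (\<Sum>p<n. d p))"

(* color factor: atoms Inl a = x_a (a < n), Inr b = y_b (b < n-1).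
   posL = position in the left-hand order y_0..y_{k-1}, x_0..x_{n-1}, y_k..y_{n-2};
   posR = position in the order of the right-hand term
   x_{s1 0}..x_{s1(i-1)}, y_{s2 0}..y_{s2(j-1)}, x_{s1 i}, y_{s2 j}..y_{s2(n-2)}, x_{s1(i+1)}..x_{s1(n-1)} *)

definition atoms :: "nat \<Rightarrow> (nat + nat) set" where
  "atoms n = Inl ` {..<n} \<union> Inr ` {..<n - 1}"

definition posL :: "nat \<Rightarrow> nat \<Rightarrow> nat + nat \<Rightarrow> nat" where
  "posL n k t = (case t of Inl a \<Rightarrow> k + a | Inr b \<Rightarrow> (if b < k then b else b + n))"

definition posR :: "nat \<Rightarrow> nat \<Rightarrow> nat \<Rightarrow> (nat \<Rightarrow> nat) \<Rightarrow> (nat \<Rightarrow> nat) \<Rightarrow> nat + nat \<Rightarrow> nat" where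
  "posR n i j s1 s2 t = (case t of
      Inl a \<Rightarrow> (let q = inv s1 a in if q < i then q else if q = i then i + j else q + n - 1)
    | Inr b \<Rightarrow> (let r = inv s2 b in if r < j then i + r else i + r + 1))"

definition color_factor :: "('g \<Rightarrow> 'g \<Rightarrow> 'k::field) \<Rightarrow> nat \<Rightarrow> nat \<Rightarrow> nat \<Rightarrow> nat
     \<Rightarrow> (nat \<Rightarrow> nat) \<Rightarrow> (nat \<Rightarrow> nat) \<Rightarrow> (nat \<Rightarrow> 'g) \<Rightarrow> (nat \<Rightarrow> 'g) \<Rightarrow> 'k" where
  "color_factor eps n k i j s1 s2 dx dy =
     (\<Prod>(a, b)\<in>{(a, b). a \<in> atoms n \<and> b \<in> atoms n \<and> posL n k a < posL n k b
                         \<and> posR n i j s1 s2 b < posR n i j s1 s2 a}.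
        eps (case_sum dx dy a) (case_sum dx dy b))"

definition gLt_identity :: "('k::field \<Rightarrow> 'v::ab_group_add \<Rightarrow> 'v) \<Rightarrow> ('g \<Rightarrow> 'v set)
    \<Rightarrow> ('g \<Rightarrow> 'g \<Rightarrow> 'k) \<Rightarrow> nat \<Rightarrow> ((nat \<Rightarrow> 'v) \<Rightarrow> 'v)
    \<Rightarrow> (nat \<Rightarrow> nat \<Rightarrow> nat \<Rightarrow> (nat \<Rightarrow> nat) \<Rightarrow> (nat \<Rightarrow> nat) \<Rightarrow> 'k) \<Rightarrow> bool" where
  "gLt_identity scale Lg eps n br alpha \<longleftrightarrow>
     (\<forall>k<n. \<forall>dx dy xs ys. (\<forall>p<n. xs p \<in> Lg (dx p)) \<and> (\<forall>p<n - 1. ys p \<in> Lg (dy p)) \<longrightarrow>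
        br (ins k (br xs) ys) =
        (\<Sum>i<n. \<Sum>j<n. \<Sum>s1\<in>perms n. \<Sum>s2\<in>perms (n - 1).
           scale (alpha i j k s1 s2 * color_factor eps n k i j s1 s2 dx dy)
             (br (ins i (br (ins j (xs (s1 i)) (ys \<circ> s2))) (del i (xs \<circ> s1))))))"

definition color_gLt :: "('k::field \<Rightarrow> 'v::ab_group_add \<Rightarrow> 'v) \<Rightarrow> ('g::ab_group_add \<Rightarrow> 'v set)
    \<Rightarrow> ('g \<Rightarrow> 'g \<Rightarrow> 'k) \<Rightarrow> nat \<Rightarrow> ((nat \<Rightarrow> 'v) \<Rightarrow> 'v) \<Rightarrow> bool" where
  "color_gLt scale Lg eps n br \<longleftrightarrow> graded_space scale Lg \<and> bicharacter eps
     \<and> multilinear scale n br \<and> graded_product Lg n br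
     \<and> (\<exists>alpha. gLt_identity scale Lg eps n br alpha)"

(* <A_1,...,A_n>_sigma : span of all <x_{sigma 0},...,x_{sigma(n-1)}> with x_r in A_r *)
definition prod_sp :: "('k::field \<Rightarrow> 'v::ab_group_add \<Rightarrow> 'v) \<Rightarrow> nat \<Rightarrow> ((nat \<Rightarrow> 'v) \<Rightarrow> 'v)
    \<Rightarrow> (nat \<Rightarrow> nat) \<Rightarrow> (nat \<Rightarrow> 'v set) \<Rightarrow> 'v set" where
  "prod_sp scale n br \<sigma> A = module.span scale {br (\<lambda>p. x (\<sigma> p)) | x. \<forall>r<n. x r \<in> A r}"

definition gLt_ideal :: "('k::field \<Rightarrow> 'v::ab_group_add \<Rightarrow> 'v) \<Rightarrow> ('g \<Rightarrow> 'v set) \<Rightarrow> nat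
    \<Rightarrow> ((nat \<Rightarrow> 'v) \<Rightarrow> 'v) \<Rightarrow> 'v set \<Rightarrow> bool" where
  "gLt_ideal scale Lg n br S \<longleftrightarrow> graded_subspace scale Lg S
     \<and> (\<forall>\<sigma>\<in>perms n. prod_sp scale n br \<sigma> (\<lambda>r. if r = 0 then S else UNIV) \<subseteq> S)"

definition simple_alg :: "('k::field \<Rightarrow> 'v::ab_group_add \<Rightarrow> 'v) \<Rightarrow> ('g \<Rightarrow> 'v set) \<Rightarrow> nat
    \<Rightarrow> ((nat \<Rightarrow> 'v) \<Rightarrow> 'v) \<Rightarrow> bool" where
  "simple_alg scale Lg n br \<longleftrightarrow> (\<forall>S. gLt_ideal scale Lg n br S \<longrightarrow> S = {0} \<or> S = UNIV)"

definition line :: "('k \<Rightarrow> 'v \<Rightarrow> 'v) \<Rightarrow> ('i \<Rightarrow> 'v) \<Rightarrow> 'i \<Rightarrow> 'v set" where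
  "line scale e j = range (\<lambda>c. scale c (e j))"

definition lin_indep_family :: "('k::field \<Rightarrow> 'v::ab_group_add \<Rightarrow> 'v) \<Rightarrow> ('i \<Rightarrow> 'v) \<Rightarrow> bool" where
  "lin_indep_family scale e \<longleftrightarrow>
     (\<forall>S c. finite S \<and> (\<Sum>i\<in>S. scale (c i) (e i)) = 0 \<longrightarrow> (\<forall>i\<in>S. c i = 0))"

definition qm_basis :: "('k::field \<Rightarrow> 'v::ab_group_add \<Rightarrow> 'v) \<Rightarrow> ('g \<Rightarrow> 'v set) \<Rightarrow> nat
    \<Rightarrow> ((nat \<Rightarrow> 'v) \<Rightarrow> 'v) \<Rightarrow> 'v set \<Rightarrow> 'v set \<Rightarrow> ('i \<Rightarrow> 'v) \<Rightarrow> bool" where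
  "qm_basis scale Lg n br V W e \<longleftrightarrow>
     graded_subspace scale Lg V \<and> graded_subspace scale Lg W
   \<and> V \<inter> W = {0} \<and> (\<forall>x. \<exists>v\<in>V. \<exists>w\<in>W. x = v + w) \<and> V \<noteq> {0} \<and> W \<noteq> {0}
   \<and> (\<forall>i. \<exists>g. e i \<in> Lg g) \<and> lin_indep_family scale e \<and> module.span scale (range e) = W
   \<and> (\<forall>is. (\<exists>j. br (\<lambda>p. e (is p)) \<in> line scale e j) \<or> br (\<lambda>p. e (is p)) \<in> V)
   \<and> (\<forall>k is. \<forall>\<sigma>\<in>perms n. 0 < k \<and> k < n \<longrightarrow>
        (\<exists>j. prod_sp scale n br \<sigma> (\<lambda>r. if r < k then {e (is r)} else V) \<subseteq> line scale e j))
   \<and> ((\<exists>j. prod_sp scale n br id (\<lambda>_. V) \<subseteq> line scale e j)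
        \<or> prod_sp scale n br id (\<lambda>_. V) \<subseteq> V)"

definition uset :: "'v set \<Rightarrow> ('i \<Rightarrow> 'v) \<Rightarrow> 'i option \<Rightarrow> 'v set" where
  "uset V e j = (case j of Some i \<Rightarrow> {e i} | None \<Rightarrow> V)"

definition a_sig :: "('k::field \<Rightarrow> 'v::ab_group_add \<Rightarrow> 'v) \<Rightarrow> nat \<Rightarrow> ((nat \<Rightarrow> 'v) \<Rightarrow> 'v)
    \<Rightarrow> 'v set \<Rightarrow> ('i \<Rightarrow> 'v) \<Rightarrow> (nat \<Rightarrow> nat) \<Rightarrow> (nat \<Rightarrow> 'i option) \<Rightarrow> 'i option set" where
  "a_sig scale n br V e \<sigma> js =
     (let P = prod_sp scale n br \<sigma> (\<lambda>r. uset V e (js r)) in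
        {Some r | r. P \<noteq> {0} \<and> P \<subseteq> line scale e r}
      \<union> (if P \<noteq> {0} \<and> P \<subseteq> V then {None} else {}))"

(* b_sigma(j, bar j_2, ..., bar j_n), with jr = (j_2,...,j_n) *)
definition b_sig :: "('k::field \<Rightarrow> 'v::ab_group_add \<Rightarrow> 'v) \<Rightarrow> nat \<Rightarrow> ((nat \<Rightarrow> 'v) \<Rightarrow> 'v)
    \<Rightarrow> 'v set \<Rightarrow> ('i \<Rightarrow> 'v) \<Rightarrow> (nat \<Rightarrow> nat) \<Rightarrow> 'i option \<Rightarrow> (nat \<Rightarrow> 'i option) \<Rightarrow> 'i option set" where
  "b_sig scale n br V e \<sigma> j jr = {x. a_sig scale n br V e \<sigma> (ins 0 x jr) = {j}}"

definition mu :: "('k::field \<Rightarrow> 'v::ab_group_add \<Rightarrow> 'v) \<Rightarrow> nat \<Rightarrow> ((nat \<Rightarrow> 'v) \<Rightarrow> 'v)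
    \<Rightarrow> 'v set \<Rightarrow> ('i \<Rightarrow> 'v) \<Rightarrow> 'i option + 'i option
    \<Rightarrow> (nat \<Rightarrow> 'i option) + (nat \<Rightarrow> 'i option) \<Rightarrow> 'i option set" where
  "mu scale n br V e t X = (case (t, X) of
      (Inl j, Inl js) \<Rightarrow> (\<Union>\<sigma>\<in>perms n. a_sig scale n br V e \<sigma> (ins 0 j js))
    | (Inl j, Inr js) \<Rightarrow> (\<Union>\<sigma>\<in>perms n. b_sig scale n br V e \<sigma> j js)
    | (Inr j, Inl js) \<Rightarrow> (\<Union>k<n - 1. \<Union>\<sigma>\<in>perms n. b_sig scale n br V e \<sigma> (js k) (ins 0 j (del k js)))
    | (Inr j, Inr js) \<Rightarrow> {})"

definition phi :: "('k::field \<Rightarrow> 'v::ab_group_add \<Rightarrow> 'v) \<Rightarrow> nat \<Rightarrow> ((nat \<Rightarrow> 'v) \<Rightarrow> 'v)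
    \<Rightarrow> 'v set \<Rightarrow> ('i \<Rightarrow> 'v) \<Rightarrow> ('i + 'i) set
    \<Rightarrow> (nat \<Rightarrow> 'i option) + (nat \<Rightarrow> 'i option) \<Rightarrow> ('i + 'i) set" where
  "phi scale n br V e J X =
     (let K = {i. Some i \<in> (\<Union>t\<in>J. mu scale n br V e (map_sum Some Some t) X)}
      in Inl ` K \<union> Inr ` K)"

primrec phis :: "('k::field \<Rightarrow> 'v::ab_group_add \<Rightarrow> 'v) \<Rightarrow> nat \<Rightarrow> ((nat \<Rightarrow> 'v) \<Rightarrow> 'v)
    \<Rightarrow> 'v set \<Rightarrow> ('i \<Rightarrow> 'v) \<Rightarrow> 'i + 'i
    \<Rightarrow> (nat \<Rightarrow> (nat \<Rightarrow> 'i option) + (nat \<Rightarrow> 'i option)) \<Rightarrow> nat \<Rightarrow> ('i + 'i) set" where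
  "phis scale n br V e ti Xs 0 = {ti}"
| "phis scale n br V e ti Xs (Suc m) = phi scale n br V e (phis scale n br V e ti Xs m) (Xs m)"

definition connected :: "('k::field \<Rightarrow> 'v::ab_group_add \<Rightarrow> 'v) \<Rightarrow> nat \<Rightarrow> ((nat \<Rightarrow> 'v) \<Rightarrow> 'v)
    \<Rightarrow> 'v set \<Rightarrow> ('i \<Rightarrow> 'v) \<Rightarrow> 'i \<Rightarrow> 'i \<Rightarrow> bool" where
  "connected scale n br V e i j \<longleftrightarrow> i = j \<or>
     (\<exists>t\<ge>1. \<exists>Xs. \<exists>ti\<in>{Inl i, Inr i}.
        (\<forall>m. 1 \<le> m \<and> m < t \<longrightarrow> phis scale n br V e ti Xs m \<noteq> {})
      \<and> Inl j \<in> phis scale n br V e ti Xs t)"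

end

theory Submission
  imports Defs
begin

text \<open>Let \<open>C\<close> be the set of indices connected to a fixed index; it is closed under taking
  successors with respect to \<open>mu\<close>. Call the basis vectors and the homogeneous elements of
  \<open>V\<close> leaves. By the axioms of a quasi-multiplicative basis, a product of leaves having some
  \<open>e j\<close> with \<open>j \<in> C\<close> among its factors is either a multiple of some \<open>e r\<close> with \<open>r \<in> C\<close>
  or lies in \<open>V\<close>. The span of \<open>e ` C\<close> and of the products of the second kind is graded, and
  the gLt identity rewrites any product with one of these products as a factor into a sum of
  products of leaves that again involve an index of \<open>C\<close>. So this span is a nonzero
  gLt-ideal, hence everything by simplicity, and linear independence of the basis forces
  every index into \<open>C\<close>.\<close>

lemma perms_lt: "\<sigma> \<in> perms m \<Longrightarrow> r < m \<Longrightarrow> \<sigma> r < m"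
  using permutes_in_image[of \<sigma> "{..<m}"] by (auto simp: perms_def)

lemma perms_inv: "\<sigma> \<in> perms m \<Longrightarrow> inv \<sigma> \<in> perms m"
  using permutes_inv by (auto simp: perms_def)

lemma perms_inv_apply: "\<sigma> \<in> perms m \<Longrightarrow> \<sigma> (inv \<sigma> r) = r"
  using permutes_inverses(1) by (auto simp: perms_def)

lemma perms_transpose: "a < m \<Longrightarrow> b < m \<Longrightarrow> transpose a b \<in> perms m"
  by (simp add: perms_def permutes_swap_id)

lemma perm_moving_set_to_front:
  assumes B: "B \<subseteq> {..<n}"
  shows "\<exists>\<sigma>\<in>perms n. \<forall>q<n. \<sigma> q < card B \<longleftrightarrow> q \<in> B"
proof -
  let ?k = "card B"
  define D where "D = {..<n} - B"
  have fB: "finite B" using B finite_subset by blast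
  have kn: "?k \<le> n" using card_mono[OF _ B] by simp
  obtain g1 where g1: "bij_betw g1 B {..<?k}"
    using finite_same_card_bij[OF fB, of "{..<?k}"] by auto
  obtain g2 where g2: "bij_betw g2 D {?k..<n}"
    using finite_same_card_bij[of D "{?k..<n}"] card_Diff_subset[OF fB B] unfolding D_def by auto
  define \<sigma> where "\<sigma> q = (if q \<in> B then g1 q else if q \<in> D then g2 q else q)" for q
  have b1: "bij_betw \<sigma> B {..<?k}"
    using g1 by (rule bij_betw_cong[THEN iffD1, rotated]) (simp add: \<sigma>_def)
  have b2: "bij_betw \<sigma> D {?k..<n}"
    using g2 by (rule bij_betw_cong[THEN iffD1, rotated]) (auto simp add: \<sigma>_def D_def)
  have "bij_betw \<sigma> (B \<union> D) ({..<?k} \<union> {?k..<n})"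
    by (rule bij_betw_combine[OF b1 b2]) auto
  moreover have "B \<union> D = {..<n}" "{..<?k} \<union> {?k..<n} = {..<n}"
    using B kn by (auto simp: D_def)
  ultimately have "\<sigma> permutes {..<n}"
    by (intro bij_imp_permutes) (auto simp: \<sigma>_def D_def)
  moreover have "\<sigma> q < ?k \<longleftrightarrow> q \<in> B" if "q < n" for q
  proof (cases "q \<in> B")
    case False
    then have "\<sigma> q \<in> {?k..<n}" using that b2 unfolding bij_betw_def D_def by blast
    then show ?thesis using False by simp
  qed (use b1 in \<open>auto simp: bij_betw_def\<close>)
  ultimately show ?thesis by (auto simp: perms_def)
qed

lemma ins_del: "ins i z (del i f) = f(i := z)"
  by (auto simp: fun_eq_iff ins_def del_def)

lemma del_ins [simp]: "del i (ins i z f) = f"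
  by (auto simp: fun_eq_iff ins_def del_def)

lemma ins_same [simp]: "ins i z f i = z"
  by (simp add: ins_def)

lemma prod_sp_cong:
  "(\<And>r. r < n \<Longrightarrow> A r = B r) \<Longrightarrow> prod_sp scale n br \<sigma> A = prod_sp scale n br \<sigma> B"
proof -
  assume "\<And>r. r < n \<Longrightarrow> A r = B r"
  then have "\<And>x. (\<forall>r<n. x r \<in> A r) = (\<forall>r<n. x r \<in> B r)" by auto
  then show ?thesis unfolding prod_sp_def by simp
qed

lemma prod_sp_permute:
  assumes \<tau>: "\<tau> \<in> perms n"
  shows "prod_sp scale n br (inv \<tau>) (\<lambda>r. A (\<tau> r)) = prod_sp scale n br id A"
proof -
  have "{br (\<lambda>p. x (inv \<tau> p)) | x. \<forall>r<n. x r \<in> A (\<tau> r)} = {br y | y. \<forall>r<n. y r \<in> A r}"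
  proof (intro set_eqI iffI)
    fix z assume "z \<in> {br (\<lambda>p. x (inv \<tau> p)) | x. \<forall>r<n. x r \<in> A (\<tau> r)}"
    then obtain x where "z = br (x \<circ> inv \<tau>)" and "\<forall>r<n. x r \<in> A (\<tau> r)" by (auto simp: comp_def)
    moreover have "\<forall>r<n. (x \<circ> inv \<tau>) r \<in> A r"
      using calculation(2) perms_lt[OF perms_inv[OF \<tau>]] perms_inv_apply[OF \<tau>] by (metis comp_apply)
    ultimately show "z \<in> {br y | y. \<forall>r<n. y r \<in> A r}" by blast
  next
    fix z assume "z \<in> {br y | y. \<forall>r<n. y r \<in> A r}"
    then obtain y where "z = br y" and "\<forall>r<n. y r \<in> A r" by auto
    moreover have "(\<lambda>p. (y \<circ> \<tau>) (inv \<tau> p)) = y" using perms_inv_apply[OF \<tau>] by auto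
    ultimately show "z \<in> {br (\<lambda>p. x (inv \<tau> p)) | x. \<forall>r<n. x r \<in> A (\<tau> r)}"
      using perms_lt[OF \<tau>] by (intro CollectI exI[of _ "y \<circ> \<tau>"]) auto
  qed
  then show ?thesis unfolding prod_sp_def by simp
qed

context vector_space
begin

lemma prod_sp_base: "(\<And>r. r < n \<Longrightarrow> f r \<in> A r) \<Longrightarrow> br f \<in> prod_sp scale n br id A"
  unfolding prod_sp_def by (rule span_base) (auto intro!: exI[of _ f])

lemma line_eq_span: "line scale e j = span {e j}"
  unfolding line_def span_singleton ..

lemma hom_decomp_add_homogeneous:
  assumes sub: "\<And>g. subspace (Lg g)" and x: "x \<in> Lg g0" and y: "hom_decomp Lg y d"
  shows "hom_decomp Lg (x + y) (d(g0 := x + d g0))"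
proof -
  let ?F = "insert g0 {g. d g \<noteq> 0}"
  have fin: "finite ?F" using y unfolding hom_decomp_def by simp
  have "x + y = x + (\<Sum>g\<in>?F. d g)"
    using y fin unfolding hom_decomp_def by (auto intro: sum.mono_neutral_left)
  also have "\<dots> = (\<Sum>g\<in>?F. (d(g0 := x + d g0)) g)"
    using fin by (simp add: sum.insert_remove sum.remove)
  also have "\<dots> = (\<Sum>g\<in>{g. (d(g0 := x + d g0)) g \<noteq> 0}. (d(g0 := x + d g0)) g)"
    using fin by (intro sum.mono_neutral_right) auto
  finally show ?thesis
    using y x sub fin subspace_add unfolding hom_decomp_def
    by (auto intro: finite_subset[OF _ fin])
qed

lemma graded_subspace_span:
  assumes gr: "graded_space scale Lg" and H: "\<And>h. h \<in> H \<Longrightarrow> \<exists>g. h \<in> Lg g"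
  shows "graded_subspace scale Lg (span H)"
proof -
  have sub: "\<And>g. subspace (Lg g)"
    and uniq: "\<And>x c d. hom_decomp Lg x c \<Longrightarrow> hom_decomp Lg x d \<Longrightarrow> c = d"
    and ex: "\<And>x. \<exists>c. hom_decomp Lg x c"
    using gr unfolding graded_space_def by metis+
  have "\<forall>c. hom_decomp Lg x c \<longrightarrow> (\<forall>g. c g \<in> span H)" if "x \<in> span H" for x
    using that
  proof (induction rule: span_induct_alt)
    case base
    have "hom_decomp Lg 0 (\<lambda>_. 0)"
      using sub subspace_0 unfolding hom_decomp_def by auto
    then show ?case using uniq span_zero by blast
  next
    case (step a h y)
    obtain g0 where h: "h \<in> Lg g0" using H[OF step(1)] by blast
    obtain d where d: "hom_decomp Lg y d" using ex by blast
    have "hom_decomp Lg (a *s h + y) (d(g0 := a *s h + d g0))"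
      using hom_decomp_add_homogeneous[OF sub subspace_scale[OF sub h] d] .
    moreover have "(d(g0 := a *s h + d g0)) g \<in> span H" for g
      using step d by (auto intro: span_add span_scale span_base)
    ultimately show ?case using uniq by blast
  qed
  then show ?thesis unfolding graded_subspace_def by auto
qed

lemma multilinear_cong:
  "multilinear scale n br \<Longrightarrow> (\<And>p. p < n \<Longrightarrow> f p = f' p) \<Longrightarrow> br f = br f'"
  unfolding multilinear_def by blast

lemma multilinear_scale:
  "multilinear scale n br \<Longrightarrow> k < n \<Longrightarrow> br (f(k := c *s a)) = c *s br (f(k := a))"
  unfolding multilinear_def by blast

lemma multilinear_zero:
  assumes "multilinear scale n br" "k < n" "f k = 0"
  shows "br f = 0"
  using multilinear_scale[OF assms(1,2), of f 0 0] assms(3) by (simp add: fun_upd_idem)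

lemma multilinear_slot_span:
  assumes ml: "multilinear scale n br" and k: "k < n" and T: "subspace T"
    and base: "\<And>a. a \<in> A \<Longrightarrow> br (f(k := a)) \<in> T" and a: "a \<in> span A"
  shows "br (f(k := a)) \<in> T"
  using a
proof (induction rule: span_induct_alt)
  case base
  show ?case using multilinear_zero[OF ml k] subspace_0[OF T] by simp
next
  case (step c x y)
  have "br (f(k := c *s x + y)) = br (f(k := c *s x)) + br (f(k := y))"
    using ml k unfolding multilinear_def by blast
  also have "\<dots> = c *s br (f(k := x)) + br (f(k := y))"
    using multilinear_scale[OF ml k] by simp
  finally show ?case
    using step base[OF step(1)] by (metis T subspace_add subspace_scale)
qed

lemma multilinear_span:
  assumes ml: "multilinear scale n br" and T: "subspace T"
    and base: "\<And>f. (\<And>q. q < n \<Longrightarrow> f q \<in> A q) \<Longrightarrow> br f \<in> T"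
    and f: "\<And>q. q < n \<Longrightarrow> f q \<in> span (A q)"
  shows "br f \<in> T"
proof -
  have "br f \<in> T" if "\<And>q. q < m \<Longrightarrow> f q \<in> span (A q)" "\<And>q. m \<le> q \<Longrightarrow> q < n \<Longrightarrow> f q \<in> A q"
    for m f
    using that
  proof (induction m arbitrary: f)
    case 0
    then show ?case using base by simp
  next
    case (Suc m)
    show ?case
    proof (cases "m < n")
      case True
      have "br (f(m := f m)) \<in> T"
      proof (rule multilinear_slot_span[OF ml True T])
        show "br (f(m := a)) \<in> T" if "a \<in> A m" for a
          using Suc that by (intro Suc.IH) (auto simp: less_Suc_eq)
      qed (use Suc.prems(1) in simp)
      then show ?thesis by simp
    next
      case False
      then show ?thesis using Suc by auto
    qed
  qed
  from this[of n f] f show ?thesis by simp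
qed

lemma lin_indep_familyD:
  "lin_indep_family scale e \<Longrightarrow> finite S \<Longrightarrow> (\<Sum>i\<in>S. c i *s e i) = 0 \<Longrightarrow> i \<in> S \<Longrightarrow> c i = 0"
  unfolding lin_indep_family_def by blast

lemma lin_indep_family_nonzero:
  assumes "lin_indep_family scale e" shows "e i \<noteq> 0"
proof
  assume "e i = 0"
  then have "(\<Sum>m\<in>{i}. (\<lambda>_. 1::'a) m *s e m) = 0" by simp
  from lin_indep_familyD[OF assms _ this] show False by simp
qed

lemma lin_indep_family_inj:
  assumes "lin_indep_family scale e" shows "inj e"
proof (rule injI, rule ccontr)
  fix a b assume ab: "e a = e b" "a \<noteq> b"
  let ?c = "\<lambda>m. if m = a then (1::'a) else -1"
  have "(\<Sum>m\<in>{a, b}. ?c m *s e m) = 0" using ab by (simp add: scale_minus_left)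
  from lin_indep_familyD[OF assms _ this, of a] show False by simp
qed

lemma lin_indep_family_in_span_image:
  assumes li: "lin_indep_family scale e" and ej: "e j \<in> span (e ` C)"
  shows "j \<in> C"
proof (rule ccontr)
  assume j: "j \<notin> C"
  obtain t r where t: "finite t" "t \<subseteq> e ` C" and ej_sum: "e j = (\<Sum>a\<in>t. r a *s a)"
    using ej unfolding span_explicit by blast
  define F where "F = C \<inter> e -` t"
  have inj: "inj_on e F" using lin_indep_family_inj[OF li] by (simp add: inj_on_def inj_def)
  have tF: "t = e ` F" using t(2) unfolding F_def by auto
  have fF: "finite F" using t(1) tF finite_image_iff[OF inj] by simp
  have jF: "j \<notin> F" using j F_def by auto
  define c where "c i = (if i = j then -1 else r (e i))" for i
  have "(\<Sum>i\<in>F. c i *s e i) = (\<Sum>i\<in>F. r (e i) *s e i)"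
    using jF by (intro sum.cong) (auto simp: c_def)
  also have "\<dots> = e j"
    unfolding ej_sum tF sum.reindex[OF inj] by simp
  finally have "(\<Sum>i\<in>insert j F. c i *s e i) = 0"
    using fF jF by (simp add: c_def)
  from lin_indep_familyD[OF li _ this] fF have "c j = 0" by simp
  then show False by (simp add: c_def)
qed

end

section \<open>Connections\<close>

definition successor_closed :: "('k::field \<Rightarrow> 'v::ab_group_add \<Rightarrow> 'v) \<Rightarrow> nat \<Rightarrow> ((nat \<Rightarrow> 'v) \<Rightarrow> 'v)
    \<Rightarrow> 'v set \<Rightarrow> ('i \<Rightarrow> 'v) \<Rightarrow> 'i set \<Rightarrow> bool" where
  "successor_closed scale n br V e C \<longleftrightarrow>
     (\<forall>j\<in>C. \<forall>t\<in>{Inl (Some j), Inr (Some j)}. \<forall>X r. Some r \<in> mu scale n br V e t X \<longrightarrow> r \<in> C)"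

lemma phis_cong:
  "(\<And>q. q < m \<Longrightarrow> Xs q = Xs' q) \<Longrightarrow> phis scale n br V e ti Xs m = phis scale n br V e ti Xs' m"
  by (induction m) auto

lemma phi_mono: "J \<subseteq> J' \<Longrightarrow> phi scale n br V e J X \<subseteq> phi scale n br V e J' X"
  unfolding phi_def Let_def by blast

lemma phi_Inl_imp_Inr: "Inl x \<in> phi scale n br V e J X \<Longrightarrow> Inr x \<in> phi scale n br V e J X"
  unfolding phi_def Let_def by blast

lemma connected_successor:
  assumes conn: "connected scale n br V e i j" and t: "t \<in> {Inl (Some j), Inr (Some j)}"
    and r: "Some r \<in> mu scale n br V e t X"
  shows "connected scale n br V e i r"
proof -
  obtain t' where t': "t' \<in> {Inl j, Inr j}" and tt': "t = map_sum Some Some t'"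
    using t by (metis insert_iff singletonD map_sum.simps(1,2))
  have step: "Inl r \<in> phi scale n br V e {t'} X"
    using r by (simp add: phi_def Let_def tt')
  show ?thesis
  proof (cases "i = j")
    case True
    then show ?thesis using t' step unfolding connected_def
      by (intro disjI2 exI[of _ 1] exI[of _ "\<lambda>_. X"] bexI[of _ t']) auto
  next
    case False
    then obtain s Xs ti where s: "s \<ge> 1" and ti: "ti \<in> {Inl i, Inr i}"
      and ne: "\<forall>m. 1 \<le> m \<and> m < s \<longrightarrow> phis scale n br V e ti Xs m \<noteq> {}"
      and j: "Inl j \<in> phis scale n br V e ti Xs s"
      using conn unfolding connected_def by blast
    define Xs' where "Xs' = Xs(s := X)"
    have same: "phis scale n br V e ti Xs' m = phis scale n br V e ti Xs m" if "m \<le> s" for m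
      using that by (intro phis_cong) (auto simp: Xs'_def)
    obtain s0 where s0: "s = Suc s0" using s by (cases s) auto
    have "Inr j \<in> phis scale n br V e ti Xs s" using j unfolding s0 by (simp add: phi_Inl_imp_Inr)
    then have "{t'} \<subseteq> phis scale n br V e ti Xs' s" using j t' same[of s] by auto
    then have "phi scale n br V e {t'} X \<subseteq> phis scale n br V e ti Xs' (Suc s)"
      by (simp add: Xs'_def phi_mono)
    then have "Inl r \<in> phis scale n br V e ti Xs' (Suc s)" using step by blast
    moreover have "phis scale n br V e ti Xs' m \<noteq> {}" if "1 \<le> m" "m < Suc s" for m
      using that same ne j by (cases "m = s") auto
    ultimately show ?thesis unfolding connected_def using ti
      by (intro disjI2 exI[of _ "Suc s"] exI[of _ Xs'] bexI[of _ ti]) auto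
  qed
qed

lemma successor_closed_connected:
  "successor_closed scale n br V e {j. connected scale n br V e i j}"
  unfolding successor_closed_def by (auto intro: connected_successor)

lemma successor_of_line_product:
  assumes p: "p < n" and jp: "js p = Some j"
    and P0: "prod_sp scale n br id (\<lambda>q. uset V e (js q)) \<noteq> {0}"
    and Pr: "prod_sp scale n br id (\<lambda>q. uset V e (js q)) \<subseteq> line scale e r"
  shows "Some r \<in> mu scale n br V e (Inl (Some j)) (Inl (del 0 (js \<circ> transpose 0 p)))"
proof -
  let ?\<tau> = "transpose 0 p"
  have \<tau>: "?\<tau> \<in> perms n" using p by (intro perms_transpose) auto
  have "prod_sp scale n br (inv ?\<tau>) (\<lambda>q. uset V e ((js \<circ> ?\<tau>) q))
      = prod_sp scale n br id (\<lambda>q. uset V e (js q))"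
    using prod_sp_permute[OF \<tau>] by simp
  moreover have "ins 0 (Some j) (del 0 (js \<circ> ?\<tau>)) = js \<circ> ?\<tau>"
    using jp by (auto simp: fun_eq_iff ins_def del_def transpose_def)
  ultimately have "Some r \<in> a_sig scale n br V e (inv ?\<tau>) (ins 0 (Some j) (del 0 (js \<circ> ?\<tau>)))"
    unfolding a_sig_def Let_def using P0 Pr by auto
  then show ?thesis unfolding mu_def using perms_inv[OF \<tau>] by auto
qed

lemma successor_of_V_product:
  assumes pq: "p < n" "q < n" "p \<noteq> q" and jp: "js p = Some j" and mq: "js q = Some m"
    and P0: "prod_sp scale n br id (\<lambda>q. uset V e (js q)) \<noteq> {0}"
    and PV: "prod_sp scale n br id (\<lambda>q. uset V e (js q)) \<subseteq> V"
    and no_line: "\<And>r. \<not> prod_sp scale n br id (\<lambda>q. uset V e (js q)) \<subseteq> line scale e r"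
  shows "\<exists>X. Some m \<in> mu scale n br V e (Inr (Some j)) X"
proof -
  define p' where "p' = transpose 0 q p"
  have p': "p' < n" "p' \<noteq> 0"
    using pq unfolding p'_def transpose_def by auto
  define \<tau> where "\<tau> = transpose 0 q \<circ> transpose 1 p'"
  have \<tau>: "\<tau> \<in> perms n" unfolding \<tau>_def perms_def using pq p'
    by (intro CollectI permutes_compose permutes_swap_id) auto
  have \<tau>01: "\<tau> 0 = q" "\<tau> 1 = p"
    using p'(2) by (simp_all add: \<tau>_def p'_def)
  define rest where "rest = del 0 (del 0 (js \<circ> \<tau>))"
  have "prod_sp scale n br (inv \<tau>) (\<lambda>r. uset V e ((js \<circ> \<tau>) r))
      = prod_sp scale n br id (\<lambda>r. uset V e (js r))"
    using prod_sp_permute[OF \<tau>] by simp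
  moreover have "ins 0 (Some m) (ins 0 (Some j) rest) = js \<circ> \<tau>"
  proof
    fix r show "ins 0 (Some m) (ins 0 (Some j) rest) r = (js \<circ> \<tau>) r"
      unfolding rest_def ins_def del_def using \<tau>01 jp mq by (cases r; cases "r - 1") auto
  qed
  ultimately have "a_sig scale n br V e (inv \<tau>) (ins 0 (Some m) (ins 0 (Some j) rest)) = {None}"
    unfolding a_sig_def Let_def using P0 PV no_line by auto
  then have "Some m \<in> b_sig scale n br V e (inv \<tau>) None (ins 0 (Some j) rest)"
    unfolding b_sig_def by simp
  moreover have "n - 1 > 0" using pq by auto
  ultimately have "Some m \<in> mu scale n br V e (Inr (Some j)) (Inl (ins 0 None rest))"
    unfolding mu_def using perms_inv[OF \<tau>]
    by (auto intro!: bexI[of _ 0] bexI[of _ "inv \<tau>"])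
  then show ?thesis ..
qed

section \<open>Algebras with a quasi-multiplicative basis\<close>

locale qm_algebra =
  fixes scale :: "'k::field \<Rightarrow> 'v::ab_group_add \<Rightarrow> 'v"
    and Lg :: "'g::ab_group_add \<Rightarrow> 'v set"
    and eps :: "'g \<Rightarrow> 'g \<Rightarrow> 'k"
    and n :: nat
    and br :: "(nat \<Rightarrow> 'v) \<Rightarrow> 'v"
    and V W :: "'v set"
    and e :: "'i \<Rightarrow> 'v"
  assumes two_le_n: "2 \<le> n"
    and color_gLt: "color_gLt scale Lg eps n br"
    and qm_basis: "qm_basis scale Lg n br V W e"
begin

sublocale vector_space scale
  using color_gLt unfolding color_gLt_def graded_space_def by auto

lemma graded_space: "graded_space scale Lg"
  and multilinear: "multilinear scale n br"
  and graded_product: "graded_product Lg n br"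
  and gLt_identity: "\<exists>alpha. gLt_identity scale Lg eps n br alpha"
  using color_gLt unfolding color_gLt_def by auto

lemma V_graded: "graded_subspace scale Lg V"
  and V_inter_W: "V \<inter> W = {0}"
  and V_plus_W: "\<exists>v\<in>V. \<exists>w\<in>W. x = v + w"
  and basis_homogeneous: "\<exists>g. e i \<in> Lg g"
  and basis_indep: "lin_indep_family scale e"
  and span_basis: "span (range e) = W"
  and basis_product: "(\<exists>j. br (\<lambda>p. e (is p)) \<in> line scale e j) \<or> br (\<lambda>p. e (is p)) \<in> V"
  and mixed_product: "\<sigma> \<in> perms n \<Longrightarrow> 0 < k \<Longrightarrow> k < n \<Longrightarrow>
     \<exists>j. prod_sp scale n br \<sigma> (\<lambda>r. if r < k then {e (is r)} else V) \<subseteq> line scale e j"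
  and product_of_V: "(\<exists>j. prod_sp scale n br id (\<lambda>_. V) \<subseteq> line scale e j)
     \<or> prod_sp scale n br id (\<lambda>_. V) \<subseteq> V"
  using qm_basis unfolding qm_basis_def by auto

lemma V_subspace: "subspace V"
  using V_graded unfolding graded_subspace_def by auto

lemma line_subspace: "subspace (line scale e r)"
  unfolding line_eq_span by simp

lemma line_inter_V: "x \<in> line scale e r \<Longrightarrow> x \<in> V \<Longrightarrow> x = 0"
  using V_inter_W span_mono[of "{e r}" "range e"]
  unfolding line_eq_span span_basis by auto

lemma basis_not_in_V: "e i \<notin> V"
proof
  assume "e i \<in> V"
  moreover have "e i \<in> line scale e i" unfolding line_eq_span by (rule span_base) simp
  ultimately show False using line_inter_V lin_indep_family_nonzero[OF basis_indep] by blast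
qed

definition leaves :: "'v set" where
  "leaves = range e \<union> {v \<in> V. \<exists>g. v \<in> Lg g}"

lemma span_leaves: "x \<in> span leaves"
proof -
  obtain v w where v: "v \<in> V" and w: "w \<in> W" and x: "x = v + w" using V_plus_W by blast
  obtain c where c: "hom_decomp Lg v c"
    using graded_space unfolding graded_space_def by metis
  have "c g \<in> {v \<in> V. \<exists>g. v \<in> Lg g}" for g
    using V_graded c v unfolding graded_subspace_def hom_decomp_def by blast
  then have "(\<Sum>g\<in>{g. c g \<noteq> 0}. c g) \<in> span {v \<in> V. \<exists>g. v \<in> Lg g}"
    by (intro span_sum span_base)
  moreover have "v = (\<Sum>g\<in>{g. c g \<noteq> 0}. c g)" using c unfolding hom_decomp_def by blast
  ultimately have "v \<in> span {v \<in> V. \<exists>g. v \<in> Lg g}" by simp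
  moreover have "w \<in> span (range e)" using w span_basis by simp
  ultimately show ?thesis unfolding leaves_def
    using x span_mono[of "range e"] span_mono[of "{v \<in> V. \<exists>g. v \<in> Lg g}"] span_add
    by (meson subsetD sup_ge1 sup_ge2)
qed

abbreviation pattern_prod :: "(nat \<Rightarrow> 'i option) \<Rightarrow> 'v set" where
  "pattern_prod js \<equiv> prod_sp scale n br id (\<lambda>r. uset V e (js r))"

lemma pattern_prod_mixed:
  assumes q1: "q1 < n" "js q1 = None" and q2: "q2 < n" "js q2 \<noteq> None"
  shows "\<exists>r. pattern_prod js \<subseteq> line scale e r"
proof -
  define B where "B = {q. q < n \<and> js q \<noteq> None}"
  have B: "B \<subseteq> {..<n}" by (auto simp: B_def)
  have "q2 \<in> B" "q1 \<notin> B" using q1 q2 by (auto simp: B_def)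
  then have k: "0 < card B" "card B < n"
    using B psubset_card_mono[of "{..<n}" B] q1(1) by (auto simp: card_gt_0_iff intro: finite_subset)
  obtain \<sigma> where \<sigma>: "\<sigma> \<in> perms n" and front: "\<forall>q<n. \<sigma> q < card B \<longleftrightarrow> q \<in> B"
    using perm_moving_set_to_front[OF B] by blast
  define "is" where "is r = the (js (inv \<sigma> r))" for r
  obtain r where r: "prod_sp scale n br \<sigma> (\<lambda>r. if r < card B then {e (is r)} else V) \<subseteq> line scale e r"
    using mixed_product[OF \<sigma> k] by blast
  have "prod_sp scale n br \<sigma> (\<lambda>r. if r < card B then {e (is r)} else V)
      = prod_sp scale n br \<sigma> (\<lambda>r. uset V e (js (inv \<sigma> r)))"
  proof (rule prod_sp_cong)
    fix r assume r: "r < n"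
    then have "inv \<sigma> r < n" "r < card B \<longleftrightarrow> inv \<sigma> r \<in> B"
      using front perms_lt[OF perms_inv[OF \<sigma>]] perms_inv_apply[OF \<sigma>] by metis+
    then show "(if r < card B then {e (is r)} else V) = uset V e (js (inv \<sigma> r))"
      by (cases "js (inv \<sigma> r)") (auto simp: B_def is_def uset_def)
  qed
  also have "\<dots> = pattern_prod js"
    using prod_sp_permute[OF perms_inv[OF \<sigma>]] \<sigma> by (simp add: perms_def permutes_inv_inv)
  finally show ?thesis using r by auto
qed

lemma pattern_prod_line_or_V: "(\<exists>r. pattern_prod js \<subseteq> line scale e r) \<or> pattern_prod js \<subseteq> V"
proof (cases "\<exists>q<n. js q = None")
  case True
  show ?thesis
  proof (cases "\<exists>q<n. js q \<noteq> None")
    case False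
    then have "pattern_prod js = prod_sp scale n br id (\<lambda>_. V)"
      by (intro prod_sp_cong) (auto simp: uset_def)
    then show ?thesis using product_of_V by simp
  qed (use True pattern_prod_mixed in blast)
next
  case False
  define "is" where "is r = the (js r)" for r
  have gen: "br x = br (\<lambda>p. e (is p))" if "\<forall>r<n. x r \<in> uset V e (js r)" for x
  proof (rule multilinear_cong[OF multilinear])
    fix p assume "p < n"
    then show "x p = e (is p)" using that False by (cases "js p") (auto simp: uset_def is_def)
  qed
  have sub: "pattern_prod js \<subseteq> T" if "subspace T" "br (\<lambda>p. e (is p)) \<in> T" for T
    unfolding prod_sp_def using that gen by (intro span_minimal) auto
  from basis_product[of "is"] show ?thesis
    using sub line_subspace V_subspace by blast
qed

definition leaf_pattern :: "(nat \<Rightarrow> 'v) \<Rightarrow> nat \<Rightarrow> 'i option" where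
  "leaf_pattern f q = (if f q \<in> V then None else Some (inv e (f q)))"

lemma basis_leaf: "e j \<in> leaves"
  by (simp add: leaves_def)

lemma leaf_homogeneous: "x \<in> leaves \<Longrightarrow> \<exists>g. x \<in> Lg g"
  using basis_homogeneous by (auto simp: leaves_def)

lemma leaf_in_uset: "f q \<in> leaves \<Longrightarrow> f q \<in> uset V e (leaf_pattern f q)"
  using lin_indep_family_inj[OF basis_indep] by (auto simp: leaves_def leaf_pattern_def uset_def)

lemma leaf_pattern_basis: "f q = e j \<Longrightarrow> leaf_pattern f q = Some j"
  using basis_not_in_V lin_indep_family_inj[OF basis_indep] by (simp add: leaf_pattern_def)

lemma leaf_pattern_SomeD: "f q \<in> leaves \<Longrightarrow> leaf_pattern f q = Some m \<Longrightarrow> f q = e m"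
  using leaf_in_uset[of f q] by (simp add: uset_def)

lemma br_leaves_in_pattern_prod:
  "(\<And>q. q < n \<Longrightarrow> f q \<in> leaves) \<Longrightarrow> br f \<in> pattern_prod (leaf_pattern f)"
  by (rule prod_sp_base) (rule leaf_in_uset)

lemma br_leaves_line_or_V:
  "(\<And>q. q < n \<Longrightarrow> f q \<in> leaves) \<Longrightarrow> (\<exists>r. br f \<in> line scale e r) \<or> br f \<in> V"
  using br_leaves_in_pattern_prod pattern_prod_line_or_V by blast

lemma br_leaves_homogeneous:
  assumes "\<And>q. q < n \<Longrightarrow> f q \<in> leaves"
  shows "\<exists>g. br f \<in> Lg g"
proof -
  define d where "d q = (SOME g. f q \<in> Lg g)" for q
  have "\<forall>p<n. f p \<in> Lg (d p)"
    unfolding d_def using assms leaf_homogeneous by (metis someI_ex)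
  then show ?thesis using graded_product unfolding graded_product_def by blast
qed

lemma br_leaves_in_V_leaf:
  "(\<And>q. q < n \<Longrightarrow> f q \<in> leaves) \<Longrightarrow> br f \<in> V \<Longrightarrow> br f \<in> leaves"
  using br_leaves_homogeneous by (auto simp: leaves_def)

end

section \<open>The ideal generated by a successor-closed set of indices\<close>

locale qm_successor_closed = qm_algebra +
  fixes C
  assumes successor_closed: "successor_closed scale n br V e C"
begin

lemma br_leaves_line_in_C:
  assumes f: "\<And>q. q < n \<Longrightarrow> f q \<in> leaves" and p: "p < n" "f p = e j" and j: "j \<in> C"
  shows "(\<exists>r\<in>C. br f \<in> line scale e r) \<or> br f \<in> V"
proof -
  let ?P = "pattern_prod (leaf_pattern f)"
  have bP: "br f \<in> ?P" by (rule br_leaves_in_pattern_prod[OF f])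
  consider r where "?P \<subseteq> line scale e r" | "?P \<subseteq> V" using pattern_prod_line_or_V by blast
  then show ?thesis
  proof cases
    case (1 r)
    show ?thesis
    proof (cases "br f = 0")
      case False
      then have "?P \<noteq> {0}" using bP by auto
      from successor_of_line_product[OF p(1) leaf_pattern_basis[of f p, OF p(2)] this 1]
      have "r \<in> C" using successor_closed j unfolding successor_closed_def by blast
      then show ?thesis using 1 bP by auto
    qed (simp add: subspace_0[OF V_subspace])
  qed (use bP in auto)
qed

lemma V_product_other_basis_slot:
  assumes f: "\<And>q. q < n \<Longrightarrow> f q \<in> leaves" and p: "p < n" "f p = e j" and j: "j \<in> C"
    and V: "br f \<in> V" and nz: "br f \<noteq> 0"
  shows "\<exists>q<n. q \<noteq> p \<and> (\<exists>m\<in>C. f q = e m)"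
proof -
  let ?js = "leaf_pattern f"
  have bP: "br f \<in> pattern_prod ?js" by (rule br_leaves_in_pattern_prod[OF f])
  then have P0: "pattern_prod ?js \<noteq> {0}" using nz by auto
  have no_line: "\<not> pattern_prod ?js \<subseteq> line scale e r" for r
    using bP V nz line_inter_V by blast
  then have PV: "pattern_prod ?js \<subseteq> V" using pattern_prod_line_or_V by blast
  have jp: "?js p = Some j" by (rule leaf_pattern_basis[of f p, OF p(2)])
  have "\<exists>q<n. q \<noteq> p \<and> ?js q \<noteq> None"
  proof (rule ccontr)
    assume "\<not> ?thesis"
    moreover define q where "q = (if p = 0 then 1 else 0::nat)"
    moreover have "q < n" "q \<noteq> p" using two_le_n by (auto simp: q_def)
    ultimately show False using pattern_prod_mixed[OF \<open>q < n\<close> _ p(1)] jp no_line by auto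
  qed
  then obtain q m where q: "q < n" "q \<noteq> p" and mq: "?js q = Some m" by blast
  from successor_of_V_product[OF p(1) q(1) q(2)[symmetric] jp mq P0 PV no_line]
  have "m \<in> C" using successor_closed j unfolding successor_closed_def by blast
  then show ?thesis using q leaf_pattern_SomeD[OF f[OF q(1)] mq] by blast
qed

definition V_products where
  "V_products = {br f | f. (\<forall>q<n. f q \<in> leaves) \<and> (\<exists>p<n. \<exists>j\<in>C. f p = e j) \<and> br f \<in> V}"

definition generated_ideal where
  "generated_ideal = span (e ` C \<union> V_products)"

lemma subspace_generated_ideal: "subspace generated_ideal"
  unfolding generated_ideal_def by simp

lemma basis_in_generated_ideal: "j \<in> C \<Longrightarrow> e j \<in> generated_ideal"
  unfolding generated_ideal_def by (intro span_base) auto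

lemma br_leaves_in_generated_ideal:
  assumes f: "\<And>q. q < n \<Longrightarrow> f q \<in> leaves" and p: "p < n" "f p = e j" and j: "j \<in> C"
  shows "br f \<in> generated_ideal"
  using br_leaves_line_in_C[of f p j, OF f p j]
proof
  assume "\<exists>r\<in>C. br f \<in> line scale e r"
  then obtain r where "r \<in> C" "br f \<in> span {e r}" unfolding line_eq_span by blast
  then show ?thesis
    unfolding generated_ideal_def using span_mono[of "{e r}" "e ` C \<union> V_products"] by blast
next
  assume "br f \<in> V"
  then have "br f \<in> V_products" unfolding V_products_def using f p j by blast
  then show ?thesis unfolding generated_ideal_def by (intro span_base) auto
qed

lemma br_update_scale_in_generated_ideal:
  "i < n \<Longrightarrow> br (u(i := a)) \<in> generated_ideal \<Longrightarrow> br (u(i := scale c a)) \<in> generated_ideal"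
  using multilinear_scale[OF multilinear] subspace_scale[OF subspace_generated_ideal] by simp

lemma br_update_in_generated_ideal:
  assumes u: "\<And>q. q < n \<Longrightarrow> u q \<in> leaves" and i: "i < n"
    and g: "\<And>q. q < n \<Longrightarrow> g q \<in> leaves"
    and q: "q < n" "q \<noteq> i" "u q = e m" and m: "m \<in> C"
  shows "br (u(i := br g)) \<in> generated_ideal"
  using br_leaves_line_or_V[OF g]
proof
  assume "\<exists>r. br g \<in> line scale e r"
  then obtain r c where c: "br g = scale c (e r)" by (auto simp: line_def)
  have "br (u(i := e r)) \<in> generated_ideal"
    using u q m basis_leaf by (intro br_leaves_in_generated_ideal[of _ q m]) auto
  then show ?thesis unfolding c by (rule br_update_scale_in_generated_ideal[OF i])
next
  assume "br g \<in> V"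
  then have "br g \<in> leaves" using br_leaves_in_V_leaf[of g] g by blast
  then show ?thesis
    using u q m by (intro br_leaves_in_generated_ideal[of _ q m]) auto
qed

text \<open>A typical term of the gLt identity applied to an element \<open>br xs\<close> of \<open>V_products\<close>:
  the entries of \<open>xs\<close> are permuted by \<open>s1\<close> and the one in slot \<open>i\<close> is replaced by a
  product \<open>br g\<close> which contains the entry \<open>xs (s1 i)\<close>.\<close>

lemma identity_term_in_generated_ideal:
  assumes xs: "\<And>q. q < n \<Longrightarrow> xs q \<in> leaves" and p0: "p0 < n" "xs p0 = e j0" and j0: "j0 \<in> C"
    and V: "br xs \<in> V" and nz: "br xs \<noteq> 0" and s1: "s1 \<in> perms n" and i: "i < n"
    and g: "\<And>q. q < n \<Longrightarrow> g q \<in> leaves" and g_j0: "s1 i = p0 \<Longrightarrow> \<exists>q<n. g q = e j0"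
  shows "br ((xs \<circ> s1)(i := br g)) \<in> generated_ideal"
proof -
  have u: "(xs \<circ> s1) q \<in> leaves" if "q < n" for q using xs perms_lt[OF s1] that by simp
  have slot: "inv s1 q < n" "(xs \<circ> s1) (inv s1 q) = xs q" if "q < n" for q
    using that perms_lt[OF perms_inv[OF s1]] perms_inv_apply[OF s1] by auto
  show ?thesis
  proof (cases "s1 i = p0")
    case False
    then have "inv s1 p0 \<noteq> i" using perms_inv_apply[OF s1] by metis
    with slot[OF p0(1)] show ?thesis
      using p0 j0
      by (intro br_update_in_generated_ideal[where q = "inv s1 p0" and m = j0, OF u i g]) auto
  next
    case True
    obtain q where q: "q < n" "g q = e j0" using g_j0[OF True] by blast
    from br_leaves_line_in_C[of g q j0, OF g q j0] show ?thesis
    proof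
      assume "\<exists>r\<in>C. br g \<in> line scale e r"
      then obtain r c where r: "r \<in> C" and c: "br g = scale c (e r)" by (auto simp: line_def)
      have "br ((xs \<circ> s1)(i := e r)) \<in> generated_ideal"
        using u i r basis_leaf by (intro br_leaves_in_generated_ideal[of _ i r]) auto
      then show ?thesis unfolding c by (rule br_update_scale_in_generated_ideal[OF i])
    next
      assume "br g \<in> V"
      \<comment> \<open>the index \<open>j0\<close> disappears into \<open>br g\<close>, so another index of \<open>C\<close> in \<open>xs\<close> is needed\<close>
      obtain q0 m where q0: "q0 < n" "q0 \<noteq> p0" "xs q0 = e m" and m: "m \<in> C"
        using V_product_other_basis_slot[of xs p0 j0, OF xs p0 j0 V nz] by blast
      then have "inv s1 q0 \<noteq> i" using True perms_inv_apply[OF s1] by metis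
      with slot[OF q0(1)] show ?thesis
        using q0 m
        by (intro br_update_in_generated_ideal[where q = "inv s1 q0" and m = m, OF u i g]) auto
    qed
  qed
qed

lemma V_product_slot_in_generated_ideal:
  assumes k: "k < n" and fk: "f k \<in> V_products" and f: "\<And>q. q < n \<Longrightarrow> q \<noteq> k \<Longrightarrow> f q \<in> leaves"
  shows "br f \<in> generated_ideal"
proof -
  obtain xs p0 j0 where fk_xs: "f k = br xs" and xs: "\<And>q. q < n \<Longrightarrow> xs q \<in> leaves"
    and p0: "p0 < n" "xs p0 = e j0" and j0: "j0 \<in> C" and V: "br xs \<in> V"
    using fk unfolding V_products_def by blast
  show ?thesis
  proof (cases "br xs = 0")
    case True
    then show ?thesis
      using multilinear_zero[OF multilinear k] fk_xs subspace_0[OF subspace_generated_ideal] by simp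
  next
    case nz: False
    define ys where "ys = del k f"
    have ys: "ys q \<in> leaves" if "q < n - 1" for q
      using that f by (auto simp: ys_def del_def)
    define dx where "dx q = (SOME g. xs q \<in> Lg g)" for q
    define dy where "dy q = (SOME g. ys q \<in> Lg g)" for q
    have "\<forall>q<n. xs q \<in> Lg (dx q)" "\<forall>q<n - 1. ys q \<in> Lg (dy q)"
      unfolding dx_def dy_def using xs ys leaf_homogeneous by (metis someI_ex)+
    moreover obtain alpha where "gLt_identity scale Lg eps n br alpha" using gLt_identity by blast
    ultimately have expand: "br (ins k (br xs) ys) =
        (\<Sum>i<n. \<Sum>j<n. \<Sum>s1\<in>perms n. \<Sum>s2\<in>perms (n - 1).
           scale (alpha i j k s1 s2 * color_factor eps n k i j s1 s2 dx dy)
             (br (ins i (br (ins j (xs (s1 i)) (ys \<circ> s2))) (del i (xs \<circ> s1)))))"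
      using k unfolding gLt_identity_def by blast
    have "br (ins i (br (ins j (xs (s1 i)) (ys \<circ> s2))) (del i (xs \<circ> s1))) \<in> generated_ideal"
      if i: "i < n" and j: "j < n" and s1: "s1 \<in> perms n" and s2: "s2 \<in> perms (n - 1)"
      for i j s1 s2
      unfolding ins_del
    proof (rule identity_term_in_generated_ideal[OF xs p0 j0 V nz s1 i])
      show "ins j (xs (s1 i)) (ys \<circ> s2) q \<in> leaves" if "q < n" for q
        using that j xs[OF perms_lt[OF s1 i]] ys perms_lt[OF s2] by (auto simp: ins_def)
      show "\<exists>q<n. ins j (xs (s1 i)) (ys \<circ> s2) q = e j0" if "s1 i = p0"
        using j that p0 by auto
    qed
    then have "br (ins k (br xs) ys) \<in> generated_ideal"
      unfolding expand
      by (intro subspace_sum[OF subspace_generated_ideal] subspace_scale[OF subspace_generated_ideal])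
        auto
    moreover have "ins k (br xs) ys = f" unfolding ys_def ins_del fk_xs[symmetric] by simp
    ultimately show ?thesis by simp
  qed
qed

lemma generator_slot_in_generated_ideal:
  assumes k: "k < n" and fk: "f k \<in> e ` C \<union> V_products"
    and f: "\<And>q. q < n \<Longrightarrow> q \<noteq> k \<Longrightarrow> f q \<in> leaves"
  shows "br f \<in> generated_ideal"
  using fk
proof
  assume "f k \<in> e ` C"
  then obtain j where j: "j \<in> C" "f k = e j" by blast
  have "f q \<in> leaves" if "q < n" for q
    using f that basis_leaf j(2) by (cases "q = k") auto
  then show ?thesis using k j by (intro br_leaves_in_generated_ideal[of f k j])
qed (rule V_product_slot_in_generated_ideal[OF k _ f])

lemma generated_ideal_absorbs_products:
  assumes \<sigma>: "\<sigma> \<in> perms n"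
  shows "prod_sp scale n br \<sigma> (\<lambda>r. if r = 0 then generated_ideal else UNIV) \<subseteq> generated_ideal"
  unfolding prod_sp_def
proof (rule span_minimal[OF _ subspace_generated_ideal], safe)
  fix x assume x: "\<forall>r<n. x r \<in> (if r = 0 then generated_ideal else UNIV)"
  define k where "k = inv \<sigma> 0"
  have k: "k < n" "\<sigma> k = 0"
    using perms_lt[OF perms_inv[OF \<sigma>], of 0] perms_inv_apply[OF \<sigma>] two_le_n by (auto simp: k_def)
  show "br (\<lambda>p. x (\<sigma> p)) \<in> generated_ideal"
  proof (rule multilinear_span[OF multilinear subspace_generated_ideal])
    show "br f \<in> generated_ideal"
      if f: "\<And>q. q < n \<Longrightarrow> f q \<in> (if q = k then e ` C \<union> V_products else leaves)" for f
    proof (rule generator_slot_in_generated_ideal[OF k(1)])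
      show "f k \<in> e ` C \<union> V_products" using f[OF k(1)] by simp
      show "f q \<in> leaves" if "q < n" "q \<noteq> k" for q using f[of q] that by simp
    qed
    show "x (\<sigma> q) \<in> span (if q = k then e ` C \<union> V_products else leaves)" if "q < n" for q
      using x k two_le_n span_leaves by (auto simp: generated_ideal_def)
  qed
qed

lemma gLt_ideal_generated_ideal: "gLt_ideal scale Lg n br generated_ideal"
proof -
  have "\<exists>g. h \<in> Lg g" if "h \<in> e ` C \<union> V_products" for h
    using that basis_homogeneous br_leaves_homogeneous unfolding V_products_def by blast
  then have "graded_subspace scale Lg generated_ideal"
    unfolding generated_ideal_def by (rule graded_subspace_span[OF graded_space])
  then show ?thesis
    unfolding gLt_ideal_def using generated_ideal_absorbs_products by blast
qed

lemma basis_in_generated_ideal_iff: "e j \<in> generated_ideal \<longleftrightarrow> j \<in> C"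
proof
  assume "e j \<in> generated_ideal"
  then obtain a b where ej: "e j = a + b" and a: "a \<in> span (e ` C)" and b: "b \<in> span V_products"
    unfolding generated_ideal_def span_Un by blast
  have "span V_products \<subseteq> V"
    by (rule span_minimal[OF _ V_subspace]) (auto simp: V_products_def)
  then have "b \<in> V" using b by blast
  moreover have "a \<in> W" "e j \<in> W"
    using a span_mono[of "e ` C" "range e"] span_base[of "e j" "range e"] span_basis by auto
  then have "b \<in> W" using ej subspace_diff[of W "e j" a] span_basis subspace_span
    by (metis add_diff_cancel_left')
  ultimately have "b = 0" using V_inter_W by blast
  then show "j \<in> C"
    using ej a lin_indep_family_in_span_image[OF basis_indep] by simp
qed (rule basis_in_generated_ideal)

lemma simple_imp_successor_closed_eq_UNIV:
  assumes simple: "simple_alg scale Lg n br" and C: "C \<noteq> {}"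
  shows "C = UNIV"
proof -
  obtain i where "i \<in> C" using C by blast
  then have "generated_ideal \<noteq> {0}"
    using basis_in_generated_ideal lin_indep_family_nonzero[OF basis_indep] by blast
  then have "generated_ideal = UNIV"
    using simple gLt_ideal_generated_ideal unfolding simple_alg_def by blast
  then show ?thesis using basis_in_generated_ideal_iff by blast
qed

end

theorem corollary3p10:
  fixes scale :: "'k::field \<Rightarrow> 'v::ab_group_add \<Rightarrow> 'v"
    and Lg :: "'g::ab_group_add \<Rightarrow> 'v set"
    and eps :: "'g \<Rightarrow> 'g \<Rightarrow> 'k"
    and n :: nat
    and br :: "(nat \<Rightarrow> 'v) \<Rightarrow> 'v"
    and V W :: "'v set"
    and e :: "'i \<Rightarrow> 'v"
  assumes "n \<ge> 2"
    and "color_gLt scale Lg eps n br"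
    and "qm_basis scale Lg n br V W e"
    and "simple_alg scale Lg n br"
  shows "\<forall>i j. connected scale n br V e i j"
proof (intro allI)
  fix i j
  let ?C = "{r. connected scale n br V e i r}"
  interpret qm_successor_closed scale Lg eps n br V W e ?C
    using assms(1-3) successor_closed_connected by unfold_locales
  have "i \<in> ?C" by (simp add: connected_def)
  then have "?C = UNIV" using simple_imp_successor_closed_eq_UNIV[OF assms(4)] by blast
  then show "connected scale n br V e i j" by blast
qed

end
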